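(* For all integers $n\ge k\ge 2$ and $r\ge 0$, \[ \mathsf{opt}_{\operatorname{bandit}}^{\operatorname{adap}}(n,k,r)\ge \frac{(k-1)r}{2}. \]
   Context: Prediction with expert advice: $\mathcal{Y}=\{1,\dots,k\}$, $\mathcal{X}=[k]^n$, experts $h_i(x)=x_i$, $i=1,\dots,n$. $\mathcal{P}_r$ is the set of finite sequences of examples in $\mathcal{X}\times\mathcal{Y}$ on which some $h_i$ errs on at most $r$ examples. Bandit feedback: each round an adaptive adversary chooses $x_t$ from the history, the learner chooses a distribution $\pi^{(t)}$ (from history and $x_t$), the adversary, seeing $\pi^{(t)}$, chooses a distribution $\tau^{(t)}$; $\hat y_t\sim\pi^{(t)}$, $y_t\sim\tau^{(t)}$, and the learner learns only whether $\hat y_t=y_t$. The adversary must ensure that whenever the history is realizable, each $y_t$ in the support of $\tau^{(t)}$ keeps it realizable, where a history of (instance, correct/incorrect, prediction) triples is realizable if some choice of true labels agreeing with the observations yields a sequence in $\mathcal{P}_r$. $\mathsf{opt}_{\operatorname{bandit}}^{\operatorname{adap}}(n,k,r)=\inf_{\text{learner}}\sup_{\text{adversary}}$ expected number of mistakes ($\hat y_t\ne y_t$). *)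

theory Defs
  imports "HOL-Probability.Probability"
begin

text \<open>Expert i (0-indexed, i < n) predicts x ! i.
  A history is a list of triples (instance, prediction correct?, prediction).\<close>

type_synonym inst = "nat list"
type_synonym hist = "(inst \<times> bool \<times> nat) list"

definition inst_space :: "nat \<Rightarrow> nat \<Rightarrow> inst set" where
  "inst_space n k = {x. length x = n \<and> set x \<subseteq> {1..k}}"

definition in_P :: "nat \<Rightarrow> nat \<Rightarrow> nat \<Rightarrow> (inst \<times> nat) list \<Rightarrow> bool" where
  "in_P n k r S \<longleftrightarrow>
     (\<forall>(x, y) \<in> set S. x \<in> inst_space n k \<and> y \<in> {1..k}) \<and>
     (\<exists>i<n. card {j. j < length S \<and> fst (S ! j) ! i \<noteq> snd (S ! j)} \<le> r)"

definition realizable :: "nat \<Rightarrow> nat \<Rightarrow> nat \<Rightarrow> hist \<Rightarrow> bool" where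
  "realizable n k r h \<longleftrightarrow>
     (\<exists>ys. length ys = length h \<and>
        (\<forall>j<length h. (fst (snd (h ! j)) \<longleftrightarrow> ys ! j = snd (snd (h ! j)))) \<and>
        in_P n k r (zip (map fst h) ys))"

definition learner_ok :: "nat \<Rightarrow> (hist \<Rightarrow> inst \<Rightarrow> nat pmf) \<Rightarrow> bool" where
  "learner_ok k L \<longleftrightarrow> (\<forall>h x. set_pmf (L h x) \<subseteq> {1..k})"

definition adversary_ok :: "nat \<Rightarrow> nat \<Rightarrow> nat \<Rightarrow> (hist \<Rightarrow> inst \<Rightarrow> nat pmf)
    \<Rightarrow> (hist \<Rightarrow> inst) \<Rightarrow> (hist \<Rightarrow> inst \<Rightarrow> nat pmf \<Rightarrow> nat pmf) \<Rightarrow> bool" where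
  "adversary_ok n k r L AX AY \<longleftrightarrow>
     (\<forall>h. AX h \<in> inst_space n k) \<and>
     (\<forall>h x p. set_pmf (AY h x p) \<subseteq> {1..k}) \<and>
     (\<forall>h. realizable n k r h \<longrightarrow>
        (\<forall>y \<in> set_pmf (AY h (AX h) (L h (AX h))).
           \<forall>yh \<in> set_pmf (L h (AX h)).
             realizable n k r (h @ [(AX h, yh = y, yh)])))"

primrec exp_mistakes :: "(hist \<Rightarrow> inst \<Rightarrow> nat pmf) \<Rightarrow> (hist \<Rightarrow> inst)
    \<Rightarrow> (hist \<Rightarrow> inst \<Rightarrow> nat pmf \<Rightarrow> nat pmf) \<Rightarrow> nat \<Rightarrow> hist \<Rightarrow> ennreal" where
  "exp_mistakes L AX AY 0 h = 0"
| "exp_mistakes L AX AY (Suc T) h =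
     (let x = AX h; p = L h x; q = AY h x p in
      \<integral>\<^sup>+ yh. (\<integral>\<^sup>+ y. ((if yh \<noteq> y then 1 else 0)
                     + exp_mistakes L AX AY T (h @ [(x, yh = y, yh)])) \<partial>measure_pmf q)
        \<partial>measure_pmf p)"

text \<open>Total expected number of mistakes = supremum over horizons (monotone convergence).\<close>
definition opt_bandit_adap :: "nat \<Rightarrow> nat \<Rightarrow> nat \<Rightarrow> ennreal" where
  "opt_bandit_adap n k r =
     (INF L \<in> {L. learner_ok k L}.
        SUP A \<in> {(AX, AY). adversary_ok n k r L AX AY}.
          SUP T. exp_mistakes L (fst A) (snd A) T [])"

end

theory Submission
  imports Defs
begin

(* The adversary always shows the instance on which experts 0, ..., k-1 predict the k distinct
   labels, and answers the label y0 that the learner predicts with probability at most 1/k.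
   Let Phi be the total number of errors that the feedback forces on these k experts: a mistake
   rules out one label and raises Phi by 1, a correct prediction (probability at most 1/k) rules
   out the other k-1 labels and raises Phi by k-1.  While Phi <= k r some expert has at most r
   forced errors, so answering y0 keeps the history realizable, and by induction on the number
   T of remaining rounds the learner still makes at least min(T, k r + 1 - Phi)/2 mistakes in
   expectation.  Taking T = k r + 1 gives (k r + 1)/2 >= (k - 1) r / 2. *)

lemma nn_integral_pmf_two_valued:
  fixes p :: "'a pmf" and a b :: real
  assumes "0 \<le> a" "0 \<le> b"
  shows "(\<integral>\<^sup>+y. ennreal (if y = y0 then a else b) \<partial>measure_pmf p)
           = ennreal (pmf p y0 * a + (1 - pmf p y0) * b)"
proof -
  have ind: "integrable (measure_pmf p) (\<lambda>y. indicator {y0} y :: real)"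
    by (rule measure_pmf.integrable_const_bound[where B = 1]) (auto split: split_indicator)
  have "(\<lambda>y. if y = y0 then a else b) = (\<lambda>y. b + (a - b) * indicator {y0} y)"
    by (auto split: split_indicator)
  moreover have "(\<integral>y. b + (a - b) * indicator {y0} y \<partial>measure_pmf p) = b + (a - b) * pmf p y0"
    using ind by (simp add: measure_pmf_single)
  ultimately show ?thesis
    using assms ind by (subst nn_integral_eq_integral) (auto simp: algebra_simps measure_pmf_single)
qed

lemma ex_pmf_le_inverse_card:
  assumes "finite A" "A \<noteq> {}"
  shows "\<exists>y\<in>A. pmf p y \<le> 1 / real (card A)"
proof (rule ccontr)
  assume "\<not> ?thesis"
  then have "(\<Sum>y\<in>A. 1 / real (card A)) < (\<Sum>y\<in>A. pmf p y)"
    using assms by (intro sum_strict_mono) auto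
  also have "\<dots> = measure (measure_pmf p) A"
    using assms by (simp add: measure_measure_pmf_finite)
  also have "\<dots> \<le> 1" by simp
  finally show False using assms by simp
qed

lemma inst_space_nth:
  assumes "x \<in> inst_space n k" and "i < n"
  shows "x ! i \<in> {1..k}"
  using assms nth_mem[of i x] unfolding inst_space_def by blast

definition rules_out :: "nat \<Rightarrow> inst \<times> bool \<times> nat \<Rightarrow> bool" where
  "rules_out y e \<longleftrightarrow> fst (snd e) \<noteq> (snd (snd e) = y)"

definition forced_errors :: "nat \<Rightarrow> hist \<Rightarrow> nat" where
  "forced_errors i h = length (filter (\<lambda>e. rules_out (fst e ! i) e) h)"

lemma forced_errors_snoc:
  "forced_errors i (h @ [e]) = forced_errors i h + (if rules_out (fst e ! i) e then 1 else 0)"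
  by (simp add: forced_errors_def)

lemma realizable_if_forced_errors_le:
  assumes "2 \<le> k" and "i < n" and "forced_errors i h \<le> r"
    and h: "\<forall>e\<in>set h. fst e \<in> inst_space n k \<and> snd (snd e) \<in> {1..k}"
  shows "realizable n k r h"
proof -
  define label where "label e =
      (if fst (snd e) then snd (snd e)
       else if fst e ! i \<noteq> snd (snd e) then fst e ! i
       else if snd (snd e) = 1 then 2 else 1)" for e :: "inst \<times> bool \<times> nat"
  have expert_in_range: "fst e ! i \<in> {1..k}" if "e \<in> set h" for e
    using h that \<open>i < n\<close> inst_space_nth by blast
  have label_in_range: "label e \<in> {1..k}" if "e \<in> set h" for e
    using h that expert_in_range[OF that] \<open>2 \<le> k\<close> unfolding label_def by auto
  define S where "S = map (\<lambda>e. (fst e, label e)) h"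
  then have S_ok: "\<forall>(x, y)\<in>set S. x \<in> inst_space n k \<and> y \<in> {1..k}"
    using h label_in_range by auto
  have "card {j. j < length S \<and> fst (S ! j) ! i \<noteq> snd (S ! j)}
      = card {j. j < length h \<and> fst (h ! j) ! i \<noteq> label (h ! j)}"
    unfolding S_def by (intro arg_cong[where f = card]) auto
  also have "\<dots> = length (filter (\<lambda>e. fst e ! i \<noteq> label e) h)"
    by (simp add: length_filter_conv_card)
  also have "filter (\<lambda>e. fst e ! i \<noteq> label e) h = filter (\<lambda>e. rules_out (fst e ! i) e) h"
    by (rule filter_cong) (auto simp: label_def rules_out_def)
  finally have "card {j. j < length S \<and> fst (S ! j) ! i \<noteq> snd (S ! j)} \<le> r"
    using \<open>forced_errors i h \<le> r\<close> by (simp add: forced_errors_def)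
  then have "in_P n k r S"
    using S_ok \<open>i < n\<close> unfolding in_P_def by (intro conjI exI[of _ i]) auto
  moreover have "zip (map fst h) (map label h) = S"
    unfolding S_def by (induction h) auto
  ultimately show ?thesis
    unfolding realizable_def by (intro exI[of _ "map label h"]) (auto simp: label_def)
qed

lemma in_P_snoc_expert_label:
  assumes "in_P n k r S" and "i < n" and "x \<in> inst_space n k"
    and "card {j. j < length S \<and> fst (S ! j) ! i \<noteq> snd (S ! j)} \<le> r"
  shows "in_P n k r (S @ [(x, x ! i)])"
proof -
  have "{j. j < length (S @ [(x, x ! i)]) \<and> fst ((S @ [(x, x ! i)]) ! j) ! i \<noteq> snd ((S @ [(x, x ! i)]) ! j)}
      = {j. j < length S \<and> fst (S ! j) ! i \<noteq> snd (S ! j)}"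
    by (auto simp: nth_append less_Suc_eq)
  then show ?thesis
    using assms inst_space_nth[OF \<open>x \<in> inst_space n k\<close> \<open>i < n\<close>] unfolding in_P_def
    by (intro conjI exI[of _ i]) auto
qed

lemma ex_label_realizable_snoc:
  assumes "realizable n k r h" and "x \<in> inst_space n k"
  shows "\<exists>y\<in>{1..k}. \<forall>yh. realizable n k r (h @ [(x, yh = y, yh)])"
proof -
  obtain ys where ys: "length ys = length h"
      "\<forall>j<length h. fst (snd (h ! j)) \<longleftrightarrow> ys ! j = snd (snd (h ! j))"
      and S: "in_P n k r (zip (map fst h) ys)"
    using assms(1) unfolding realizable_def by blast
  then obtain i where "i < n"
    and "card {j. j < length (zip (map fst h) ys) \<and>
            fst (zip (map fst h) ys ! j) ! i \<noteq> snd (zip (map fst h) ys ! j)} \<le> r"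
    unfolding in_P_def by blast
  then have "in_P n k r (zip (map fst h) ys @ [(x, x ! i)])"
    using S assms(2) by (intro in_P_snoc_expert_label)
  then have "realizable n k r (h @ [(x, yh = x ! i, yh)])" for yh
    unfolding realizable_def using ys
    by (intro exI[of _ "ys @ [x ! i]"]) (auto simp: nth_append less_Suc_eq)
  then show ?thesis
    using inst_space_nth[OF assms(2) \<open>i < n\<close>] by blast
qed

definition least_likely_label :: "nat \<Rightarrow> nat pmf \<Rightarrow> nat" where
  "least_likely_label k p = (SOME y. y \<in> {1..k} \<and> pmf p y \<le> 1 / real k)"

lemma least_likely_label:
  assumes "1 \<le> k"
  shows "least_likely_label k p \<in> {1..k}" and "pmf p (least_likely_label k p) \<le> 1 / real k"
proof -
  have "\<exists>y. y \<in> {1..k} \<and> pmf p y \<le> 1 / real k"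
    using ex_pmf_le_inverse_card[of "{1..k}" p] assms by auto
  then have "least_likely_label k p \<in> {1..k} \<and> pmf p (least_likely_label k p) \<le> 1 / real k"
    unfolding least_likely_label_def by (rule someI_ex)
  then show "least_likely_label k p \<in> {1..k}" and "pmf p (least_likely_label k p) \<le> 1 / real k"
    by auto
qed

definition safe_label :: "nat \<Rightarrow> nat \<Rightarrow> nat \<Rightarrow> hist \<Rightarrow> inst \<Rightarrow> nat pmf \<Rightarrow> nat \<Rightarrow> bool" where
  "safe_label n k r h x p y \<longleftrightarrow>
     y \<in> {1..k} \<and> (\<forall>yh\<in>set_pmf p. realizable n k r (h @ [(x, yh = y, yh)]))"

(* Off the histories that actually arise, the least likely label may break realizability; then
   any safe label is used instead, since adversary_ok constrains every realizable history. *)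
definition adversary_label :: "nat \<Rightarrow> nat \<Rightarrow> nat \<Rightarrow> hist \<Rightarrow> inst \<Rightarrow> nat pmf \<Rightarrow> nat" where
  "adversary_label n k r h x p =
     (let y0 = least_likely_label k p in
      if safe_label n k r h x p y0 \<or> \<not> (\<exists>y. safe_label n k r h x p y) then y0
      else SOME y. safe_label n k r h x p y)"

lemma adversary_label_in_range:
  assumes "1 \<le> k"
  shows "adversary_label n k r h x p \<in> {1..k}"
  using least_likely_label(1)[OF assms] someI_ex[of "safe_label n k r h x p"]
  unfolding adversary_label_def Let_def safe_label_def by auto

lemma safe_adversary_label:
  assumes "1 \<le> k" and "realizable n k r h" and "x \<in> inst_space n k"
  shows "safe_label n k r h x p (adversary_label n k r h x p)"
proof -
  have "\<exists>y. safe_label n k r h x p y"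
    using ex_label_realizable_snoc[OF assms(2,3)] unfolding safe_label_def by blast
  then show ?thesis
    using someI_ex[of "safe_label n k r h x p"] unfolding adversary_label_def Let_def by auto
qed

definition spread_instance :: "nat \<Rightarrow> nat \<Rightarrow> inst" where
  "spread_instance n k = [1..<Suc k] @ replicate (n - k) 1"

lemma spread_instance_nth: "i < k \<Longrightarrow> spread_instance n k ! i = Suc i"
  by (simp add: spread_instance_def nth_append del: upt_Suc)

lemma spread_instance_in_inst_space: "1 \<le> k \<Longrightarrow> k \<le> n \<Longrightarrow> spread_instance n k \<in> inst_space n k"
  by (auto simp: spread_instance_def inst_space_def)

lemma adversary_ok_spread:
  assumes "1 \<le> k" and "k \<le> n"
  shows "adversary_ok n k r L (\<lambda>_. spread_instance n k)
           (\<lambda>h x p. return_pmf (adversary_label n k r h x p))"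
  using adversary_label_in_range[OF assms(1)]
    safe_adversary_label[OF assms(1) _ spread_instance_in_inst_space[OF assms]]
  unfolding adversary_ok_def safe_label_def
  by (auto simp: spread_instance_in_inst_space[OF assms])

definition spread_history :: "nat \<Rightarrow> nat \<Rightarrow> hist \<Rightarrow> bool" where
  "spread_history n k h \<longleftrightarrow> (\<forall>e\<in>set h. fst e = spread_instance n k \<and> snd (snd e) \<in> {1..k})"

definition total_forced_errors :: "nat \<Rightarrow> hist \<Rightarrow> nat" where
  "total_forced_errors k h = (\<Sum>i<k. forced_errors i h)"

lemma total_forced_errors_snoc_spread:
  assumes "yh \<in> {1..k}"
  shows "total_forced_errors k (h @ [(spread_instance n k, c, yh)])
           = total_forced_errors k h + (if c then k - 1 else 1)"
proof -
  have "total_forced_errors k (h @ [(spread_instance n k, c, yh)])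
      = total_forced_errors k h + (\<Sum>i<k. if c \<noteq> (yh = Suc i) then 1 else 0)"
    by (simp add: total_forced_errors_def forced_errors_snoc rules_out_def spread_instance_nth
        sum.distrib)
  also have "(\<Sum>i<k. if c \<noteq> (yh = Suc i) then 1 else 0) = card ({..<k} \<inter> {i. c \<noteq> (yh = Suc i)})"
    by (simp add: sum.If_cases)
  also have "{..<k} \<inter> {i. c \<noteq> (yh = Suc i)} = (if c then {..<k} - {yh - 1} else {yh - 1})"
    using assms by auto
  also have "card \<dots> = (if c then k - 1 else 1)"
    using assms by (auto simp: card_Diff_singleton_if)
  finally show ?thesis .
qed

lemma realizable_if_total_forced_errors_less:
  assumes "2 \<le> k" and "k \<le> n" and "spread_history n k h"
    and "total_forced_errors k h < k * (r + 1)"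
  shows "realizable n k r h"
proof -
  have "\<exists>i<k. forced_errors i h \<le> r"
  proof (rule ccontr)
    assume "\<not> ?thesis"
    then have "k * (r + 1) \<le> total_forced_errors k h"
      using sum_bounded_below[of "{..<k}" "r + 1" "\<lambda>i. forced_errors i h"]
      unfolding total_forced_errors_def by fastforce
    then show False using assms(4) by simp
  qed
  then obtain i where "i < k" and "forced_errors i h \<le> r" by blast
  moreover have "\<forall>e\<in>set h. fst e \<in> inst_space n k \<and> snd (snd e) \<in> {1..k}"
    using assms(3) spread_instance_in_inst_space assms(1,2) unfolding spread_history_def by auto
  ultimately show ?thesis
    using assms(1,2) by (intro realizable_if_forced_errors_le[of k i]) auto
qed

lemma adversary_label_spread:
  assumes "2 \<le> k" and "k \<le> n" and "spread_history n k h"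
    and "total_forced_errors k h \<le> k * r" and "set_pmf p \<subseteq> {1..k}"
  shows "adversary_label n k r h (spread_instance n k) p = least_likely_label k p"
proof -
  let ?y0 = "least_likely_label k p"
  have "realizable n k r (h @ [(spread_instance n k, yh = ?y0, yh)])" if "yh \<in> set_pmf p" for yh
  proof (rule realizable_if_total_forced_errors_less)
    show "spread_history n k (h @ [(spread_instance n k, yh = ?y0, yh)])"
      using assms(3,5) that unfolding spread_history_def by auto
    have "yh \<in> {1..k}"
      using assms(5) that by blast
    then have "total_forced_errors k (h @ [(spread_instance n k, yh = ?y0, yh)])
        \<le> total_forced_errors k h + (k - 1)"
      using total_forced_errors_snoc_spread[of yh k h n "yh = ?y0"] assms(1) by auto
    then show "total_forced_errors k (h @ [(spread_instance n k, yh = ?y0, yh)]) < k * (r + 1)"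
      using assms(1,4) by simp
  qed (use assms in auto)
  then have "safe_label n k r h (spread_instance n k) p ?y0"
    using least_likely_label(1)[of k p] assms(1) unfolding safe_label_def by auto
  then show ?thesis unfolding adversary_label_def Let_def by simp
qed

lemma half_min_le_mixture:
  fixes q :: real and k m T :: nat
  assumes "2 \<le> k" and "0 \<le> q" and "q \<le> 1" and "q * k \<le> 1"
  shows "real (min (Suc T) m) / 2
           \<le> q * (real (min T (m - (k - 1))) / 2) + (1 - q) * (1 + real (min T (m - 1)) / 2)"
proof -
  define A where "A = real (min (Suc T) m)"
  have "min (Suc T) m \<le> min T (m - (k - 1)) + (k - 1)" and "min (Suc T) m \<le> min T (m - 1) + 1"
    using assms(1) by (auto simp: min_def)
  then have "A \<le> real (min T (m - (k - 1)) + (k - 1))" and "A \<le> real (min T (m - 1) + 1)"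
    unfolding A_def by (simp_all only: of_nat_le_iff)
  then have "A - real k + 1 \<le> real (min T (m - (k - 1)))" and "A - 1 \<le> real (min T (m - 1))"
    using assms(1) by (simp_all add: of_nat_diff)
  then have mixture_mono: "q * ((A - real k + 1) / 2) \<le> q * (real (min T (m - (k - 1))) / 2)"
    "(1 - q) * (1 + (A - 1) / 2) \<le> (1 - q) * (1 + real (min T (m - 1)) / 2)"
    using assms(2,3) by (simp_all add: mult_left_mono)
  have "A / 2 \<le> A / 2 + (1 - q * k) / 2"
    using assms(4) by simp
  also have "\<dots> = q * ((A - real k + 1) / 2) + (1 - q) * (1 + (A - 1) / 2)"
    by (simp add: field_simps)
  also have "\<dots> \<le> q * (real (min T (m - (k - 1))) / 2) + (1 - q) * (1 + real (min T (m - 1)) / 2)"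
    by (rule add_mono) (fact mixture_mono)+
  finally show ?thesis
    unfolding A_def .
qed

lemma exp_mistakes_spread_adversary_ge:
  assumes "2 \<le> k" and "k \<le> n" and "learner_ok k L" and "spread_history n k h"
  shows "ennreal (real (min T (k * r + 1 - total_forced_errors k h)) / 2)
      \<le> exp_mistakes L (\<lambda>_. spread_instance n k)
           (\<lambda>h x p. return_pmf (adversary_label n k r h x p)) T h"
  using assms(4)
proof (induction T arbitrary: h)
  case 0
  then show ?case by simp
next
  case (Suc T)
  let ?x = "spread_instance n k"
  let ?E = "exp_mistakes L (\<lambda>_. ?x) (\<lambda>h x p. return_pmf (adversary_label n k r h x p))"
  define m where "m = k * r + 1 - total_forced_errors k h"
  show ?case
  proof (cases "total_forced_errors k h \<le> k * r")
    case False
    then show ?thesis by simp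
  next
    case True
    define p where "p = L h ?x"
    define y0 where "y0 = least_likely_label k p"
    define a where "a = real (min T (m - (k - 1))) / 2"
    define b where "b = real (min T (m - 1)) / 2"
    have p_range: "set_pmf p \<subseteq> {1..k}"
      using assms(3) unfolding learner_ok_def p_def by blast
    have step: "?E (Suc T) h
        = (\<integral>\<^sup>+yh. ((if yh \<noteq> y0 then 1 else 0) + ?E T (h @ [(?x, yh = y0, yh)])) \<partial>measure_pmf p)"
      using adversary_label_spread[OF assms(1,2) Suc.prems True p_range]
      by (simp add: p_def y0_def Let_def)
    have next_round: "ennreal (if yh = y0 then a else 1 + b)
        \<le> (if yh \<noteq> y0 then 1 else 0) + ?E T (h @ [(?x, yh = y0, yh)])"
      if "yh \<in> set_pmf p" for yh
    proof -
      have "yh \<in> {1..k}"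
        using p_range that by blast
      then have "spread_history n k (h @ [(?x, yh = y0, yh)])"
        using Suc.prems unfolding spread_history_def by auto
      moreover have "k * r + 1 - total_forced_errors k (h @ [(?x, yh = y0, yh)])
          = (if yh = y0 then m - (k - 1) else m - 1)"
        using total_forced_errors_snoc_spread[OF \<open>yh \<in> {1..k}\<close>, of h n "yh = y0"]
        unfolding m_def by simp
      ultimately show ?thesis
        using Suc.IH[of "h @ [(?x, yh = y0, yh)]"]
        by (auto simp: a_def b_def ennreal_plus[symmetric] add_left_mono)
    qed
    have "ennreal (real (min (Suc T) m) / 2) \<le> ennreal (pmf p y0 * a + (1 - pmf p y0) * (1 + b))"
      using half_min_le_mixture[of k "pmf p y0" T m] least_likely_label(2)[of k p] assms(1)
      unfolding a_def b_def y0_def by (intro ennreal_leI) (auto simp: pmf_le_1 field_simps)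
    also have "\<dots> = (\<integral>\<^sup>+yh. ennreal (if yh = y0 then a else 1 + b) \<partial>measure_pmf p)"
      by (rule nn_integral_pmf_two_valued[symmetric]) (auto simp: a_def b_def)
    also have "\<dots> \<le> ?E (Suc T) h"
      unfolding step by (intro nn_integral_mono_AE AE_pmfI next_round)
    finally show ?thesis
      unfolding m_def .
  qed
qed

theorem lemma4p11:
  fixes n k r :: nat
  assumes "2 \<le> k" and "k \<le> n"
  shows "ennreal (real (k - 1) * real r / 2) \<le> opt_bandit_adap n k r"
  unfolding opt_bandit_adap_def
proof (rule INF_greatest)
  fix L assume "L \<in> {L. learner_ok k L}"
  let ?A = "(\<lambda>_ :: hist. spread_instance n k, \<lambda>h x p. return_pmf (adversary_label n k r h x p))"
  let ?worst = "SUP A \<in> {(AX, AY). adversary_ok n k r L AX AY}. SUP T. exp_mistakes L (fst A) (snd A) T []"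
  have "ennreal (real (k - 1) * real r / 2) \<le> ennreal (real (k * r + 1) / 2)"
    using assms by (intro ennreal_leI) (simp add: of_nat_diff algebra_simps)
  also have "\<dots> \<le> exp_mistakes L (fst ?A) (snd ?A) (k * r + 1) []"
    using exp_mistakes_spread_adversary_ge[OF assms, of L "[]" "k * r + 1" r] \<open>L \<in> _\<close>
    by (simp add: spread_history_def total_forced_errors_def forced_errors_def)
  also have "\<dots> \<le> ?worst"
    using adversary_ok_spread[of k n r L] assms
    by (intro SUP_upper2[of ?A] SUP_upper) auto
  finally show "ennreal (real (k - 1) * real r / 2) \<le> ?worst" .
qed

end
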